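(* Let $\mathbb X=\langle X,\rho\rangle$ be a countable structure with $\rho$ an equivalence relation whose classes are countably infinitely many singletons together with exactly one class of size $i$ for each $i\ge2$; and let $\mathbb Y=\langle Y,\sigma\rangle$ be a countable structure with $\sigma$ an equivalence relation whose classes are countably infinitely many singletons together with exactly one further class, which is countably infinite. Then $\mathbb X\equiv_{\mathcal P}\mathbb Y$, $\mathbb X\not\equiv_{\mathcal P_{\infty\omega}}\mathbb Y$, and $\mathbb X\not\equiv\mathbb Y$.
   Context: The language has one binary relation symbol $R$. $\equiv$ is first order elementary equivalence. $\mathcal P_0$ consists of all atomic formulas ($v_\alpha=v_\beta$, $R(v_\alpha,v_\beta)$) and all $\neg\,v_\alpha=v_\beta$; $\mathcal P$ is the closure of $\mathcal P_0$ under finite conjunctions, finite disjunctions, $\forall v$ and $\exists v$ (no negation), and $\mathcal P_{\infty\omega}$ is the closure of $\mathcal P_0$ under $\forall v$, $\exists v$ and conjunctions and disjunctions of arbitrary sets of formulas (no negation). For a class $\mathcal F$, $\mathbb X\equiv_{\mathcal F}\mathbb Y$ means $\mathbb X,\mathbb Y$ satisfy the same sentences of $\mathcal F$. *)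

theory Defs
  imports Main "HOL-Library.Countable_Set"
begin

datatype fm =
    FEq nat nat
  | FRel nat nat
  | FNeg fm
  | FConj fm fm
  | FDisj fm fm
  | FAll nat fm
  | FEx nat fm

fun fv :: "fm \<Rightarrow> nat set" where
  "fv (FEq a b) = {a, b}"
| "fv (FRel a b) = {a, b}"
| "fv (FNeg p) = fv p"
| "fv (FConj p q) = fv p \<union> fv q"
| "fv (FDisj p q) = fv p \<union> fv q"
| "fv (FAll v p) = fv p - {v}"
| "fv (FEx v p) = fv p - {v}"

fun sat :: "'a set \<Rightarrow> ('a \<times> 'a) set \<Rightarrow> fm \<Rightarrow> (nat \<Rightarrow> 'a) \<Rightarrow> bool" where
  "sat A R (FEq a b) e = (e a = e b)"
| "sat A R (FRel a b) e = ((e a, e b) \<in> R)"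
| "sat A R (FNeg p) e = (\<not> sat A R p e)"
| "sat A R (FConj p q) e = (sat A R p e \<and> sat A R q e)"
| "sat A R (FDisj p q) e = (sat A R p e \<or> sat A R q e)"
| "sat A R (FAll v p) e = (\<forall>x\<in>A. sat A R p (e(v := x)))"
| "sat A R (FEx v p) e = (\<exists>x\<in>A. sat A R p (e(v := x)))"

fun positive :: "fm \<Rightarrow> bool" where
  "positive (FEq a b) = True"
| "positive (FRel a b) = True"
| "positive (FNeg p) = (\<exists>a b. p = FEq a b)"
| "positive (FConj p q) = (positive p \<and> positive q)"
| "positive (FDisj p q) = (positive p \<and> positive q)"
| "positive (FAll v p) = positive p"
| "positive (FEx v p) = positive p"

definition holds :: "'a set \<Rightarrow> ('a \<times> 'a) set \<Rightarrow> fm \<Rightarrow> bool" where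
  "holds A R p \<longleftrightarrow> (\<forall>e. (\<forall>n. e n \<in> A) \<longrightarrow> sat A R p e)"

definition elem_equiv ::
  "'a set \<Rightarrow> ('a \<times> 'a) set \<Rightarrow> 'b set \<Rightarrow> ('b \<times> 'b) set \<Rightarrow> bool" where
  "elem_equiv A R B S \<longleftrightarrow> (\<forall>p. fv p = {} \<longrightarrow> (holds A R p \<longleftrightarrow> holds B S p))"

definition pos_equiv ::
  "'a set \<Rightarrow> ('a \<times> 'a) set \<Rightarrow> 'b set \<Rightarrow> ('b \<times> 'b) set \<Rightarrow> bool" where
  "pos_equiv A R B S \<longleftrightarrow>
     (\<forall>p. fv p = {} \<and> positive p \<longrightarrow> (holds A R p \<longleftrightarrow> holds B S p))"

text \<open>Infinitary positive formulas \<P>_{\<infinity>\<omega>}: conjunctions and disjunctions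
  over arbitrary families of formulas, indexed by subsets of nat
  (sufficient for countable structures).\<close>
datatype pfm =
    PEq nat nat
  | PRel nat nat
  | PNeq nat nat
  | PConj "nat set" "nat \<Rightarrow> pfm"
  | PDisj "nat set" "nat \<Rightarrow> pfm"
  | PAll nat pfm
  | PEx nat pfm

primrec pfv :: "pfm \<Rightarrow> nat set" where
  "pfv (PEq a b) = {a, b}"
| "pfv (PRel a b) = {a, b}"
| "pfv (PNeq a b) = {a, b}"
| "pfv (PConj I f) = (\<Union>i\<in>I. pfv (f i))"
| "pfv (PDisj I f) = (\<Union>i\<in>I. pfv (f i))"
| "pfv (PAll v p) = pfv p - {v}"
| "pfv (PEx v p) = pfv p - {v}"

primrec psat :: "'a set \<Rightarrow> ('a \<times> 'a) set \<Rightarrow> pfm \<Rightarrow> (nat \<Rightarrow> 'a) \<Rightarrow> bool" where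
  "psat A R (PEq a b) e = (e a = e b)"
| "psat A R (PRel a b) e = ((e a, e b) \<in> R)"
| "psat A R (PNeq a b) e = (e a \<noteq> e b)"
| "psat A R (PConj I f) e = (\<forall>i\<in>I. psat A R (f i) e)"
| "psat A R (PDisj I f) e = (\<exists>i\<in>I. psat A R (f i) e)"
| "psat A R (PAll v p) e = (\<forall>x\<in>A. psat A R p (e(v := x)))"
| "psat A R (PEx v p) e = (\<exists>x\<in>A. psat A R p (e(v := x)))"

definition pholds :: "'a set \<Rightarrow> ('a \<times> 'a) set \<Rightarrow> pfm \<Rightarrow> bool" where
  "pholds A R p \<longleftrightarrow> (\<forall>e. (\<forall>n. e n \<in> A) \<longrightarrow> psat A R p e)"

definition inf_pos_equiv ::
  "'a set \<Rightarrow> ('a \<times> 'a) set \<Rightarrow> 'b set \<Rightarrow> ('b \<times> 'b) set \<Rightarrow> bool" where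
  "inf_pos_equiv A R B S \<longleftrightarrow>
     (\<forall>p. pfv p = {} \<longrightarrow> (pholds A R p \<longleftrightarrow> pholds B S p))"

end

theory Submission
  imports Defs
begin

text \<open>
  Positive formulas (no negation except on equalities) are preserved by bijective
  homomorphisms. Sending the singletons of X onto the singletons of Y and the points of
  the finite nontrivial classes onto the infinite class is such a map, so positive
  sentences pass from X to Y. Conversely, a positive sentence of quantifier depth m true in Y holds in X:
  in the m-round game where Spoiler picks in Y for an existential and in X for a universal
  quantifier, Duplicator keeps the pebbles equality-preserving and homomorphic from Y to X,
  answering a fresh element of C inside an X-class with at least m free elements; such
  classes exist because class sizes are unbounded.
  The infinitary sentence "some class is infinite" holds only in Y, and the first-order
  sentence "at most one class is nontrivial", which negates the relation, also holds only in Y.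
\<close>

lemma infinite_iff_inj_on_atLeastAtMost:
  "infinite B \<longleftrightarrow> (\<forall>n::nat. \<exists>f. f ` {1..n} \<subseteq> B \<and> inj_on f {1..n})"
proof
  assume "infinite B"
  show "\<forall>n::nat. \<exists>f. f ` {1..n} \<subseteq> B \<and> inj_on f {1..n}"
  proof
    fix n
    obtain S where "finite S" "card S = n" "S \<subseteq> B"
      using infinite_arbitrarily_large[OF \<open>infinite B\<close>] by blast
    moreover obtain f where "bij_betw f {1..card S} S"
      using ex_bij_betw_nat_finite_1[OF \<open>finite S\<close>] by blast
    ultimately show "\<exists>f. f ` {1..n} \<subseteq> B \<and> inj_on f {1..n}" by (auto simp: bij_betw_def)
  qed
next
  assume inj: "\<forall>n::nat. \<exists>f. f ` {1..n} \<subseteq> B \<and> inj_on f {1..n}"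
  show "infinite B"
  proof
    assume "finite B"
    obtain f where "f ` {1..Suc (card B)} \<subseteq> B" "inj_on f {1..Suc (card B)}" using inj by blast
    then have "card {1..Suc (card B)} \<le> card B" using card_inj_on_le \<open>finite B\<close> by blast
    then show False by simp
  qed
qed

lemma two_le_card_obtain:
  assumes "2 \<le> card K"
  obtains z w where "z \<in> K" "w \<in> K" "z \<noteq> w"
proof -
  obtain z L where "K = insert z L" "z \<notin> L" "1 \<le> card L"
    using assms card_le_Suc_iff[of 1 K] by (auto simp: numeral_2_eq_2)
  moreover then obtain w where "w \<in> L" by fastforce
  ultimately show thesis using that by blast
qed

lemma card_Diff_insert_ge:
  assumes "Suc m \<le> card (A - B)" shows "m \<le> card (A - insert x B)"
proof -
  have "A - insert x B = (A - B) - {x}" by blast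
  moreover have "card (A - B) - card {x} \<le> card (A - B - {x})"
    by (rule diff_card_le_card_Diff) simp
  ultimately show ?thesis using assms by simp
qed

lemma countable_infinite_bij_betw:
  assumes "countable A" "infinite A" "countable B" "infinite B"
  obtains f where "bij_betw f A B"
  using bij_betw_trans[OF to_nat_on_infinite[OF assms(1,2)] bij_betw_from_nat_into[OF assms(3,4)]]
  by blast

lemma infinite_singleton_points:
  assumes "equiv A R" "infinite {K \<in> A//R. card K = 1}"
  shows "infinite {x \<in> A. R``{x} = {x}}"
proof
  assume "finite {x \<in> A. R``{x} = {x}}"
  moreover have "{K \<in> A//R. card K = 1} \<subseteq> (\<lambda>x. {x}) ` {x \<in> A. R``{x} = {x}}"
  proof
    fix K assume "K \<in> {K \<in> A//R. card K = 1}"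
    then obtain x where K: "K \<in> A//R" "K = {x}" by (auto simp: card_1_singleton_iff)
    obtain z where "K = R``{z}" using K(1) by (rule quotientE)
    then have "(z, x) \<in> R" using K(2) by blast
    then have "R``{x} = K" using \<open>K = R``{z}\<close> equiv_class_eq[OF assms(1)] by blast
    moreover have "x \<in> A" using K in_quotient_imp_subset[OF assms(1)] by blast
    ultimately show "K \<in> (\<lambda>x. {x}) ` {x \<in> A. R``{x} = {x}}" using K(2) by blast
  qed
  ultimately show False using assms(2) finite_surj by blast
qed

lemma singletons_outside_class:
  assumes "equiv A R" "C \<in> A//R" "\<forall>D\<in>A//R. D \<noteq> C \<longrightarrow> card D = 1"
  shows "\<forall>y\<in>A - C. R``{y} = {y}"
proof
  fix y assume "y \<in> A - C"
  then have "R``{y} \<in> A//R" "y \<in> R``{y}"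
    using quotientI equiv_class_self[OF assms(1)] by auto
  moreover from this(1) have "R``{y} \<noteq> C" using \<open>y \<in> A - C\<close> \<open>y \<in> R``{y}\<close> by blast
  ultimately show "R``{y} = {y}" using assms(3) by (metis card_1_singletonE singletonD)
qed

lemma infinite_outside_infinite_class:
  assumes "equiv A R" "C \<in> A//R" "infinite C" "infinite {K \<in> A//R. card K = 1}"
  shows "infinite (A - C)"
proof -
  have "{y \<in> A. R``{y} = {y}} \<subseteq> A - C"
  proof clarify
    fix y assume "y \<in> A" "R``{y} = {y}" "y \<in> C"
    then have "C \<subseteq> {y}" using in_quotient_imp_in_rel[OF assms(1,2)] by blast
    then show False using assms(3) finite_subset by blast
  qed
  then show ?thesis using infinite_singleton_points[OF assms(1,4)] finite_subset by blast
qed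

lemma sat_bij_hom:
  assumes "positive \<phi>" and h: "bij_betw h A B" and hom: "\<forall>a b. (a, b) \<in> R \<longrightarrow> (h a, h b) \<in> S"
    and "\<forall>n. e n \<in> A" and "sat A R \<phi> e"
  shows "sat B S \<phi> (h \<circ> e)"
  using assms(1,4,5)
proof (induction \<phi> arbitrary: e)
  case (FNeg p)
  then show ?case using bij_betw_imp_inj_on[OF h] by (auto simp: inj_on_def)
next
  case (FEx v p)
  then obtain x where x: "x \<in> A" "sat A R p (e(v := x))" by auto
  moreover have "\<forall>n. (e(v := x)) n \<in> A" using FEx.prems x by simp
  ultimately have "sat B S p (h \<circ> e(v := x))" using FEx.IH FEx.prems(1) by (metis positive.simps(7))
  moreover have "h x \<in> B" using \<open>x \<in> A\<close> h by (auto simp: bij_betw_def)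
  ultimately show ?case by (auto simp only: fun_upd_comp sat.simps)
next
  case (FAll v p)
  have "sat B S p ((h \<circ> e)(v := h x))" if "x \<in> A" for x
  proof -
    have "\<forall>n. (e(v := x)) n \<in> A" "sat A R p (e(v := x))" using FAll.prems that by simp_all
    then have "sat B S p (h \<circ> e(v := x))" using FAll.IH FAll.prems(1) by (metis positive.simps(6))
    then show ?thesis by (simp only: fun_upd_comp)
  qed
  then show ?case by (simp only: sat.simps) (metis bij_betw_imp_surj_on h imageE)
qed (use hom in auto)

lemma holds_bij_hom:
  assumes "positive \<phi>" and h: "bij_betw h A B" and "\<forall>a b. (a, b) \<in> R \<longrightarrow> (h a, h b) \<in> S"
    and "holds A R \<phi>"
  shows "holds B S \<phi>"
  unfolding holds_def
proof (intro allI impI)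
  fix e :: "nat \<Rightarrow> 'b" assume e: "\<forall>n. e n \<in> B"
  have "\<forall>n. (inv_into A h \<circ> e) n \<in> A" using e h by (simp add: bij_betw_def inv_into_into)
  then have "sat B S \<phi> (h \<circ> (inv_into A h \<circ> e))"
    using assms sat_bij_hom unfolding holds_def by blast
  also have "h \<circ> (inv_into A h \<circ> e) = e"
    using e bij_betw_inv_into_right[OF h] by (auto simp: fun_eq_iff)
  finally show "sat B S \<phi> e" .
qed

primrec pexs :: "nat \<Rightarrow> pfm \<Rightarrow> pfm" where
  "pexs 0 p = p"
| "pexs (Suc k) p = PEx (Suc k) (pexs k p)"

lemma pfv_pexs: "pfv (pexs k p) = pfv p - {1..k}"
proof (induction k)
  case (Suc k)
  have "{1..Suc k} = insert (Suc k) {1..k}" by auto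
  then show ?case using Suc by auto
qed simp

lemma psat_pexs:
  "psat A R (pexs k p) e \<longleftrightarrow>
     (\<exists>e'. (\<forall>i\<in>{1..k}. e' i \<in> A) \<and> (\<forall>i. i \<notin> {1..k} \<longrightarrow> e' i = e i) \<and> psat A R p e')"
proof (induction k arbitrary: e)
  case 0
  have "(\<forall>i. e' i = e i) \<longleftrightarrow> e' = e" for e' by auto
  then show ?case by simp
next
  case (Suc k)
  show ?case
  proof
    assume "psat A R (pexs (Suc k) p) e"
    then obtain x e' where "x \<in> A" "\<forall>i\<in>{1..k}. e' i \<in> A"
      "\<forall>i. i \<notin> {1..k} \<longrightarrow> e' i = (e(Suc k := x)) i" "psat A R p e'"
      using Suc by auto
    then show "\<exists>e'. (\<forall>i\<in>{1..Suc k}. e' i \<in> A) \<and> (\<forall>i. i \<notin> {1..Suc k} \<longrightarrow> e' i = e i) \<and> psat A R p e'"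
      by (intro exI[of _ e']) (auto simp: le_Suc_eq)
  next
    assume "\<exists>e'. (\<forall>i\<in>{1..Suc k}. e' i \<in> A) \<and> (\<forall>i. i \<notin> {1..Suc k} \<longrightarrow> e' i = e i) \<and> psat A R p e'"
    then obtain e' where e': "\<forall>i\<in>{1..Suc k}. e' i \<in> A" "\<forall>i. i \<notin> {1..Suc k} \<longrightarrow> e' i = e i"
      "psat A R p e'" by blast
    have "psat A R (pexs k p) (e(Suc k := e' (Suc k)))"
      unfolding Suc by (rule exI[of _ e']) (use e' in \<open>auto simp: le_Suc_eq\<close>)
    then show "psat A R (pexs (Suc k) p) e" using e' by auto
  qed
qed

definition related_distinct :: "nat \<Rightarrow> pfm" where
  "related_distinct n = PConj {1..n} (\<lambda>i. PConj {1..n} (\<lambda>j. if i = j then PRel 0 i else PNeq i j))"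

definition infinite_class_pfm :: pfm where
  "infinite_class_pfm = PEx 0 (PConj UNIV (\<lambda>n. pexs n (related_distinct n)))"

lemma pfv_infinite_class_pfm: "pfv infinite_class_pfm = {}"
proof -
  have "pfv (related_distinct n) \<subseteq> insert 0 {1..n}" for n
    unfolding related_distinct_def by (auto split: if_splits)
  then show ?thesis unfolding infinite_class_pfm_def by (auto simp: pfv_pexs)
qed

lemma psat_related_distinct:
  "psat A R (related_distinct n) e \<longleftrightarrow> (\<forall>i\<in>{1..n}. (e 0, e i) \<in> R) \<and> inj_on e {1..n}"
  unfolding related_distinct_def inj_on_def by (auto simp: if_distrib[of "\<lambda>p. psat A R p e"])

lemma psat_infinite_class_pfm:
  "psat A R infinite_class_pfm e \<longleftrightarrow> (\<exists>x\<in>A. infinite (A \<inter> R``{x}))"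
proof -
  have "psat A R (pexs n (related_distinct n)) (e(0 := x)) \<longleftrightarrow>
      (\<exists>f. f ` {1..n} \<subseteq> A \<inter> R``{x} \<and> inj_on f {1..n})" for n x
  proof
    assume "psat A R (pexs n (related_distinct n)) (e(0 := x))"
    then obtain e' where "\<forall>i\<in>{1..n}. e' i \<in> A" "\<forall>i. i \<notin> {1..n} \<longrightarrow> e' i = (e(0 := x)) i"
      and "psat A R (related_distinct n) e'"
      unfolding psat_pexs by blast
    then show "\<exists>f. f ` {1..n} \<subseteq> A \<inter> R``{x} \<and> inj_on f {1..n}"
      by (intro exI[of _ e']) (auto simp: psat_related_distinct)
  next
    assume "\<exists>f. f ` {1..n} \<subseteq> A \<inter> R``{x} \<and> inj_on f {1..n}"
    then obtain f where f: "f ` {1..n} \<subseteq> A \<inter> R``{x}" "inj_on f {1..n}" by blast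
    define e' where "e' v = (if v \<in> {1..n} then f v else (e(0 := x)) v)" for v
    have "inj_on e' {1..n}" using f(2) by (rule inj_on_cong[THEN iffD1, rotated]) (simp add: e'_def)
    then have "psat A R (related_distinct n) e'"
      using f(1) by (auto simp: psat_related_distinct e'_def)
    moreover have "\<forall>i\<in>{1..n}. e' i \<in> A" using f(1) by (auto simp: e'_def)
    ultimately show "psat A R (pexs n (related_distinct n)) (e(0 := x))"
      unfolding psat_pexs by (intro exI[of _ e']) (simp add: e'_def)
  qed
  then show ?thesis
    unfolding infinite_class_pfm_def by (simp only: psat.simps infinite_iff_inj_on_atLeastAtMost) simp
qed

definition one_nontrivial_class_fm :: fm where
  "one_nontrivial_class_fm =
     FEx 0 (FAll 1 (FAll 2 (FDisj (FNeg (FRel 1 2)) (FDisj (FEq 1 2) (FRel 0 1)))))"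

lemma fv_one_nontrivial_class_fm: "fv one_nontrivial_class_fm = {}"
  unfolding one_nontrivial_class_fm_def by auto

lemma sat_one_nontrivial_class_fm:
  "sat A R one_nontrivial_class_fm e \<longleftrightarrow>
     (\<exists>x\<in>A. \<forall>z\<in>A. \<forall>w\<in>A. (z, w) \<in> R \<longrightarrow> z = w \<or> (x, z) \<in> R)"
  unfolding one_nontrivial_class_fm_def by auto

fun qdepth :: "fm \<Rightarrow> nat" where
  "qdepth (FEq a b) = 0"
| "qdepth (FRel a b) = 0"
| "qdepth (FNeg p) = qdepth p"
| "qdepth (FConj p q) = max (qdepth p) (qdepth q)"
| "qdepth (FDisj p q) = max (qdepth p) (qdepth q)"
| "qdepth (FAll v p) = Suc (qdepth p)"
| "qdepth (FEx v p) = Suc (qdepth p)"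

locale finite_unbounded_classes =
  fixes X :: "'a set" and \<rho> :: "('a \<times> 'a) set"
  assumes equiv_X: "equiv X \<rho>"
    and classes_finite: "\<forall>K\<in>X//\<rho>. finite K"
    and classes_unbounded: "\<forall>N. \<exists>K\<in>X//\<rho>. N \<le> card K"
begin

lemma X_refl: "x \<in> X \<Longrightarrow> (x, x) \<in> \<rho>"
  using equiv_X by (meson equivE refl_onD)

lemma X_sym: "(x, y) \<in> \<rho> \<Longrightarrow> (y, x) \<in> \<rho>"
  using equiv_X by (meson equivE symD)

lemma X_trans: "(x, y) \<in> \<rho> \<Longrightarrow> (y, z) \<in> \<rho> \<Longrightarrow> (x, z) \<in> \<rho>"
  using equiv_X by (meson equivE transD)

lemma X_nonempty: "X \<noteq> {}"
  using classes_unbounded by force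

lemma class_finite: "x \<in> X \<Longrightarrow> finite (\<rho>``{x})"
  using classes_finite by (simp add: quotientI)

lemma class_eq: "K \<in> X//\<rho> \<Longrightarrow> x \<in> K \<Longrightarrow> K = \<rho>``{x}"
  by (metis equiv_X equiv_class_eq quotientE Image_singleton_iff)

lemma fresh_class:
  assumes "finite U"
  obtains K where "K \<in> X//\<rho>" "N \<le> card K" "K \<inter> U = {}"
proof -
  obtain K where K: "K \<in> X//\<rho>" "N + Suc (\<Sum>u\<in>U. card (\<rho>``{u})) \<le> card K"
    using classes_unbounded by blast
  have "K \<inter> U = {}"
  proof (rule ccontr)
    assume "K \<inter> U \<noteq> {}"
    then obtain u where "u \<in> K" "u \<in> U" by blast
    then have "K = \<rho>``{u}" using class_eq[OF K(1)] by blast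
    then have "card K \<le> (\<Sum>u\<in>U. card (\<rho>``{u}))"
      using member_le_sum[of u U "\<lambda>u. card (\<rho>``{u})"] \<open>u \<in> U\<close> \<open>finite U\<close> by simp
    then show False using K(2) by simp
  qed
  then show thesis using K that by simp
qed

lemma not_pholds_infinite_class_pfm: "\<not> pholds X \<rho> infinite_class_pfm"
proof
  assume "pholds X \<rho> infinite_class_pfm"
  moreover obtain x0 where "x0 \<in> X" using X_nonempty by blast
  ultimately have "psat X \<rho> infinite_class_pfm (\<lambda>_. x0)" unfolding pholds_def by simp
  then show False unfolding psat_infinite_class_pfm using class_finite by blast
qed

lemma not_holds_one_nontrivial_class_fm: "\<not> holds X \<rho> one_nontrivial_class_fm"
proof
  assume "holds X \<rho> one_nontrivial_class_fm"
  moreover obtain x0 where "x0 \<in> X" using X_nonempty by blast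
  ultimately have "sat X \<rho> one_nontrivial_class_fm (\<lambda>_. x0)" unfolding holds_def by simp
  then obtain x where "x \<in> X"
    and one_class: "\<forall>z\<in>X. \<forall>w\<in>X. (z, w) \<in> \<rho> \<longrightarrow> z = w \<or> (x, z) \<in> \<rho>"
    unfolding sat_one_nontrivial_class_fm by blast
  obtain K where K: "K \<in> X//\<rho>" "2 \<le> card K" "K \<inter> {x} = {}"
    using fresh_class[of "{x}" 2] by blast
  obtain z w where "z \<in> K" "w \<in> K" "z \<noteq> w" using K(2) by (rule two_le_card_obtain)
  moreover have "K \<subseteq> X" using K(1) equiv_X by (rule in_quotient_imp_subset[rotated])
  ultimately have "(x, z) \<in> \<rho>"
    using one_class in_quotient_imp_in_rel[OF equiv_X K(1)] by blast
  then have "(z, x) \<in> \<rho>" by (rule X_sym)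
  then have "x \<in> K" using in_quotient_imp_closed[OF equiv_X K(1) \<open>z \<in> K\<close>] by blast
  then show False using K(3) by blast
qed

end

locale one_infinite_class =
  fixes Y :: "'b set" and \<sigma> :: "('b \<times> 'b) set" and C :: "'b set"
  assumes equiv_Y: "equiv Y \<sigma>"
    and C_class: "C \<in> Y//\<sigma>"
    and C_infinite: "infinite C"
    and singletons_outside_C: "\<forall>y\<in>Y - C. \<sigma>``{y} = {y}"
    and infinite_outside_C: "infinite (Y - C)"
begin

lemma Y_refl: "y \<in> Y \<Longrightarrow> (y, y) \<in> \<sigma>"
  using equiv_Y by (meson equivE refl_onD)

lemma Y_sym: "(x, y) \<in> \<sigma> \<Longrightarrow> (y, x) \<in> \<sigma>"
  using equiv_Y by (meson equivE symD)

lemma C_subset: "C \<subseteq> Y"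
  using C_class equiv_Y by (rule in_quotient_imp_subset[rotated])

lemma C_related: "a \<in> C \<Longrightarrow> b \<in> C \<Longrightarrow> (a, b) \<in> \<sigma>"
  using in_quotient_imp_in_rel[OF equiv_Y C_class] by blast

lemma C_closed: "a \<in> C \<Longrightarrow> (a, b) \<in> \<sigma> \<Longrightarrow> b \<in> C"
  by (rule in_quotient_imp_closed[OF equiv_Y C_class])

lemma related_cases:
  assumes "(a, b) \<in> \<sigma>" shows "a = b \<or> a \<in> C \<and> b \<in> C"
proof (cases "a \<in> C")
  case False
  moreover have "a \<in> Y" using assms equiv_type[OF equiv_Y] by blast
  ultimately have "\<sigma>``{a} = {a}" using singletons_outside_C by blast
  then show ?thesis using assms by (metis Image_singleton_iff singletonD)
qed (use assms C_closed in blast)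

lemma pholds_infinite_class_pfm: "pholds Y \<sigma> infinite_class_pfm"
proof -
  obtain x where "x \<in> C" using infinite_imp_nonempty[OF C_infinite] by blast
  then have "C \<subseteq> Y \<inter> \<sigma>``{x}" using C_subset C_related by blast
  then have "infinite (Y \<inter> \<sigma>``{x})" using C_infinite finite_subset by blast
  moreover have "x \<in> Y" using \<open>x \<in> C\<close> C_subset by blast
  ultimately have "\<exists>x\<in>Y. infinite (Y \<inter> \<sigma>``{x})" by blast
  then show ?thesis by (simp add: pholds_def psat_infinite_class_pfm)
qed

lemma holds_one_nontrivial_class_fm: "holds Y \<sigma> one_nontrivial_class_fm"
proof -
  obtain x where "x \<in> C" using infinite_imp_nonempty[OF C_infinite] by blast
  moreover have "x \<in> Y" using \<open>x \<in> C\<close> C_subset by blast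
  ultimately show ?thesis
    unfolding holds_def sat_one_nontrivial_class_fm using related_cases C_related by blast
qed

end

locale positive_game = finite_unbounded_classes X \<rho> + one_infinite_class Y \<sigma> C
  for X :: "'a set" and \<rho> and Y :: "'b set" and \<sigma> and C
begin

text \<open>
  The assignments e into Y and e' into X are the pebbles on the variables V. With m rounds
  left, a pebble on C must sit in an X-class with at least m unused elements, so every later
  pebble on C can be answered inside that class.
\<close>
definition good_position :: "nat \<Rightarrow> nat set \<Rightarrow> (nat \<Rightarrow> 'b) \<Rightarrow> (nat \<Rightarrow> 'a) \<Rightarrow> bool" where
  "good_position m V e e' \<longleftrightarrow> finite V \<and> e ` V \<subseteq> Y \<and> e' ` V \<subseteq> X
     \<and> (\<forall>a\<in>V. \<forall>b\<in>V. e a = e b \<longleftrightarrow> e' a = e' b)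
     \<and> (\<forall>a\<in>V. \<forall>b\<in>V. (e a, e b) \<in> \<sigma> \<longrightarrow> (e' a, e' b) \<in> \<rho>)
     \<and> (\<forall>a\<in>V. e a \<in> C \<longrightarrow> m \<le> card (\<rho>``{e' a} - e' ` V))"

lemma good_position_restrict:
  assumes pos: "good_position m V e e'" and "W \<subseteq> V"
  shows "good_position m W e e'"
proof -
  have "card (\<rho>``{e' a} - e' ` V) \<le> card (\<rho>``{e' a} - e' ` W)" if "a \<in> V" for a
    using pos that \<open>W \<subseteq> V\<close> class_finite
    by (intro card_mono) (auto simp: good_position_def)
  moreover have "finite W" using pos \<open>W \<subseteq> V\<close> finite_subset unfolding good_position_def by blast
  moreover have "e ` W \<subseteq> Y" "e' ` W \<subseteq> X"
    using pos \<open>W \<subseteq> V\<close> unfolding good_position_def by (meson image_mono order_trans)+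
  ultimately show ?thesis
    using pos \<open>W \<subseteq> V\<close> unfolding good_position_def by (meson le_trans subsetD)
qed

lemma good_position_extend:
  assumes pos: "good_position (Suc m) W e e'" and "v \<notin> W" and "y \<in> Y" "x \<in> X"
    and eq: "\<forall>b\<in>W. y = e b \<longleftrightarrow> x = e' b"
    and hom: "\<forall>b\<in>W. (y, e b) \<in> \<sigma> \<longrightarrow> (x, e' b) \<in> \<rho>"
    and room: "y \<in> C \<Longrightarrow> m \<le> card (\<rho>``{x} - insert x (e' ` W))"
  shows "good_position m (insert v W) (e(v := y)) (e'(v := x))"
proof -
  let ?e = "e(v := y)" and ?e' = "e'(v := x)"
  have img: "?e' ` insert v W = insert x (e' ` W)"
    using \<open>v \<notin> W\<close> by auto
  have hom': "\<forall>b\<in>W. (e b, y) \<in> \<sigma> \<longrightarrow> (e' b, x) \<in> \<rho>"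
    using hom by (meson X_sym Y_sym)
  have "(?e a, ?e b) \<in> \<sigma> \<Longrightarrow> (?e' a, ?e' b) \<in> \<rho>" if "a \<in> insert v W" "b \<in> insert v W" for a b
    using that pos hom hom' \<open>v \<notin> W\<close> X_refl[OF \<open>x \<in> X\<close>]
    unfolding good_position_def by (cases "a = v"; cases "b = v") auto
  moreover have "m \<le> card (\<rho>``{?e' a} - ?e' ` insert v W)" if "a \<in> insert v W" "?e a \<in> C" for a
  proof (cases "a = v")
    case False
    then have "Suc m \<le> card (\<rho>``{e' a} - e' ` W)"
      using that pos unfolding good_position_def by auto
    then show ?thesis using False unfolding img by (simp add: card_Diff_insert_ge)
  qed (use that room img in simp)
  moreover have "?e a = ?e b \<longleftrightarrow> ?e' a = ?e' b" if "a \<in> insert v W" "b \<in> insert v W" for a b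
    using that pos eq \<open>v \<notin> W\<close> unfolding good_position_def by (cases "a = v"; cases "b = v") auto
  moreover have "finite (insert v W)" "?e ` insert v W \<subseteq> Y" "?e' ` insert v W \<subseteq> X"
    using pos \<open>y \<in> Y\<close> \<open>x \<in> X\<close> \<open>v \<notin> W\<close> unfolding good_position_def by auto
  ultimately show ?thesis unfolding good_position_def by blast
qed

lemma good_position_extend_existing:
  assumes pos: "good_position (Suc m) W e e'" and "v \<notin> W" and "a \<in> W"
  shows "good_position m (insert v W) (e(v := e a)) (e'(v := e' a))"
proof (rule good_position_extend[OF pos \<open>v \<notin> W\<close>])
  show "e a \<in> Y" "e' a \<in> X" "\<forall>b\<in>W. e a = e b \<longleftrightarrow> e' a = e' b"
    "\<forall>b\<in>W. (e a, e b) \<in> \<sigma> \<longrightarrow> (e' a, e' b) \<in> \<rho>"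
    using pos \<open>a \<in> W\<close> unfolding good_position_def by auto
  assume "e a \<in> C"
  then have "Suc m \<le> card (\<rho>``{e' a} - e' ` W)"
    using pos \<open>a \<in> W\<close> unfolding good_position_def by blast
  then show "m \<le> card (\<rho>``{e' a} - insert (e' a) (e' ` W))" by (rule card_Diff_insert_ge)
qed

lemma good_position_extend_outside_C:
  assumes pos: "good_position (Suc m) W e e'" and "v \<notin> W"
    and "y \<in> Y - C" "y \<notin> e ` W" and "x \<in> X" "x \<notin> e' ` W"
  shows "good_position m (insert v W) (e(v := y)) (e'(v := x))"
proof (rule good_position_extend[OF pos \<open>v \<notin> W\<close>])
  show "\<forall>b\<in>W. (y, e b) \<in> \<sigma> \<longrightarrow> (x, e' b) \<in> \<rho>"
    using related_cases assms(3,4) by blast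
qed (use assms in auto)

lemma good_position_extend_within_class:
  assumes pos: "good_position (Suc m) W e e'" and "v \<notin> W"
    and "a \<in> W" "e a \<in> C" "(e' a, x) \<in> \<rho>"
    and "y \<in> C" "y \<notin> e ` W" "x \<notin> e' ` W"
  shows "good_position m (insert v W) (e(v := y)) (e'(v := x))"
proof (rule good_position_extend[OF pos \<open>v \<notin> W\<close>])
  show "y \<in> Y" using \<open>y \<in> C\<close> C_subset by blast
  show "x \<in> X" using \<open>(e' a, x) \<in> \<rho>\<close> equiv_type[OF equiv_X] by blast
  show "\<forall>b\<in>W. y = e b \<longleftrightarrow> x = e' b" using assms(7,8) by auto
  show "\<forall>b\<in>W. (y, e b) \<in> \<sigma> \<longrightarrow> (x, e' b) \<in> \<rho>"
  proof (intro ballI impI)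
    fix b assume "b \<in> W" "(y, e b) \<in> \<sigma>"
    then have "(e a, e b) \<in> \<sigma>" using C_closed C_related \<open>y \<in> C\<close> \<open>e a \<in> C\<close> by blast
    then have "(e' a, e' b) \<in> \<rho>" using pos \<open>a \<in> W\<close> \<open>b \<in> W\<close> unfolding good_position_def by blast
    then show "(x, e' b) \<in> \<rho>" using X_trans[OF X_sym[OF \<open>(e' a, x) \<in> \<rho>\<close>]] by blast
  qed
  have "Suc m \<le> card (\<rho>``{e' a} - e' ` W)"
    using pos \<open>a \<in> W\<close> \<open>e a \<in> C\<close> unfolding good_position_def by blast
  moreover have "\<rho>``{x} = \<rho>``{e' a}"
    using \<open>(e' a, x) \<in> \<rho>\<close> equiv_class_eq[OF equiv_X] by blast
  ultimately show "m \<le> card (\<rho>``{x} - insert x (e' ` W))" by (simp add: card_Diff_insert_ge)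
qed

lemma good_position_extend_new_class:
  assumes pos: "good_position (Suc m) W e e'" and "v \<notin> W"
    and "\<forall>b\<in>W. e b \<notin> C" and "y \<in> C"
    and "K \<in> X//\<rho>" "Suc m \<le> card K" "K \<inter> e' ` W = {}" "x \<in> K"
  shows "good_position m (insert v W) (e(v := y)) (e'(v := x))"
proof (rule good_position_extend[OF pos \<open>v \<notin> W\<close>])
  show "y \<in> Y" using \<open>y \<in> C\<close> C_subset by blast
  show "x \<in> X" using \<open>K \<in> X//\<rho>\<close> \<open>x \<in> K\<close> in_quotient_imp_subset[OF equiv_X] by blast
  show "\<forall>b\<in>W. y = e b \<longleftrightarrow> x = e' b" using assms(3,4,7,8) by auto
  show "\<forall>b\<in>W. (y, e b) \<in> \<sigma> \<longrightarrow> (x, e' b) \<in> \<rho>" using assms(3,4) C_closed by blast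
  have "K - e' ` W = K" using \<open>K \<inter> e' ` W = {}\<close> by blast
  then have "m \<le> card (K - insert x (e' ` W))"
    using card_Diff_insert_ge[of m K "e' ` W" x] \<open>Suc m \<le> card K\<close> by simp
  then show "m \<le> card (\<rho>``{x} - insert x (e' ` W))"
    using class_eq[OF \<open>K \<in> X//\<rho>\<close> \<open>x \<in> K\<close>] by simp
qed

lemma good_position_answer_exists:
  assumes pos: "good_position (Suc m) W e e'" and "v \<notin> W" and "y \<in> Y"
  shows "\<exists>x\<in>X. good_position m (insert v W) (e(v := y)) (e'(v := x))"
proof -
  have "finite W" using pos unfolding good_position_def by blast
  consider (existing) a where "a \<in> W" "y = e a"
    | (outside_C) "y \<notin> e ` W" "y \<notin> C"
    | (class_in_use) a where "y \<notin> e ` W" "y \<in> C" "a \<in> W" "e a \<in> C"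
    | (new_class) "y \<notin> e ` W" "y \<in> C" "\<forall>b\<in>W. e b \<notin> C"
    by blast
  then show ?thesis
  proof cases
    case existing
    then have "e' a \<in> X" using pos unfolding good_position_def by blast
    then show ?thesis
      using good_position_extend_existing[OF pos \<open>v \<notin> W\<close> \<open>a \<in> W\<close>] \<open>y = e a\<close> by blast
  next
    case outside_C
    obtain K where K: "K \<in> X//\<rho>" "1 \<le> card K" "K \<inter> e' ` W = {}"
      using fresh_class \<open>finite W\<close> by blast
    then have "K \<noteq> {}" by auto
    then obtain x where "x \<in> K" by blast
    then have "x \<in> X" "x \<notin> e' ` W"
      using K in_quotient_imp_subset[OF equiv_X] by blast+
    then show ?thesis
      using good_position_extend_outside_C[OF pos \<open>v \<notin> W\<close>] outside_C \<open>y \<in> Y\<close> by blast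
  next
    case class_in_use
    then have "Suc m \<le> card (\<rho>``{e' a} - e' ` W)"
      using pos unfolding good_position_def by blast
    then have "\<rho>``{e' a} - e' ` W \<noteq> {}" by (metis card.empty not_less_eq_eq zero_le)
    then obtain x where "(e' a, x) \<in> \<rho>" "x \<notin> e' ` W" by blast
    moreover then have "x \<in> X" using equiv_type[OF equiv_X] by blast
    ultimately show ?thesis
      using good_position_extend_within_class[OF pos \<open>v \<notin> W\<close>] class_in_use by blast
  next
    case new_class
    obtain K where K: "K \<in> X//\<rho>" "Suc m \<le> card K" "K \<inter> e' ` W = {}"
      using fresh_class \<open>finite W\<close> by blast
    then have "K \<noteq> {}" by auto
    then obtain x where "x \<in> K" by blast
    moreover then have "x \<in> X" using K in_quotient_imp_subset[OF equiv_X] by blast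
    ultimately show ?thesis
      using good_position_extend_new_class[OF pos \<open>v \<notin> W\<close> _ _ K] new_class by blast
  qed
qed

lemma good_position_answer_forall:
  assumes pos: "good_position (Suc m) W e e'" and "v \<notin> W" and "x \<in> X"
  shows "\<exists>y\<in>Y. good_position m (insert v W) (e(v := y)) (e'(v := x))"
proof -
  have "finite W" using pos unfolding good_position_def by blast
  consider (existing) a where "a \<in> W" "x = e' a"
    | (class_in_use) a where "x \<notin> e' ` W" "a \<in> W" "e a \<in> C" "(e' a, x) \<in> \<rho>"
    | (elsewhere) "x \<notin> e' ` W" "\<forall>a\<in>W. e a \<in> C \<longrightarrow> (e' a, x) \<notin> \<rho>"
    by blast
  then show ?thesis
  proof cases
    case existing
    then have "e a \<in> Y" using pos unfolding good_position_def by blast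
    then show ?thesis
      using good_position_extend_existing[OF pos \<open>v \<notin> W\<close> \<open>a \<in> W\<close>] \<open>x = e' a\<close> by blast
  next
    case class_in_use
    have "infinite (C - e ` W)" using C_infinite \<open>finite W\<close> by simp
    then obtain y where "y \<in> C" "y \<notin> e ` W" using infinite_imp_nonempty by blast
    moreover then have "y \<in> Y" using C_subset by blast
    ultimately show ?thesis
      using good_position_extend_within_class[OF pos \<open>v \<notin> W\<close>] class_in_use by blast
  next
    case elsewhere
    have "infinite (Y - C - e ` W)" using infinite_outside_C \<open>finite W\<close> by simp
    then obtain y where "y \<in> Y - C" "y \<notin> e ` W" using infinite_imp_nonempty by blast
    then show ?thesis
      using good_position_extend_outside_C[OF pos \<open>v \<notin> W\<close> _ _ \<open>x \<in> X\<close>] elsewhere by blast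
  qed
qed

lemma sat_transfer:
  assumes "positive \<phi>" "qdepth \<phi> \<le> m" "good_position m V e e'" "fv \<phi> \<subseteq> V" "sat Y \<sigma> \<phi> e"
  shows "sat X \<rho> \<phi> e'"
  using assms
proof (induction \<phi> arbitrary: m V e e')
  case (FNeg p)
  then show ?case unfolding good_position_def by auto
next
  case (FEx v p)
  then obtain m' where m: "m = Suc m'" "qdepth p \<le> m'" by (cases m) auto
  have pos: "good_position (Suc m') (V - {v}) e e'"
    using FEx.prems(3) m(1) by (blast intro: good_position_restrict)
  have "positive p" "fv p \<subseteq> insert v (V - {v})" using FEx.prems(1,4) by auto
  obtain y where y: "y \<in> Y" "sat Y \<sigma> p (e(v := y))" using FEx.prems(5) by auto
  then obtain x where "x \<in> X" "good_position m' (insert v (V - {v})) (e(v := y)) (e'(v := x))"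
    using good_position_answer_exists[OF pos] by blast
  then have "sat X \<rho> p (e'(v := x))"
    using FEx.IH[OF \<open>positive p\<close> m(2) _ \<open>fv p \<subseteq> _\<close> y(2)] by blast
  then show ?case using \<open>x \<in> X\<close> by auto
next
  case (FAll v p)
  then obtain m' where m: "m = Suc m'" "qdepth p \<le> m'" by (cases m) auto
  have pos: "good_position (Suc m') (V - {v}) e e'"
    using FAll.prems(3) m(1) by (blast intro: good_position_restrict)
  have "positive p" "fv p \<subseteq> insert v (V - {v})" using FAll.prems(1,4) by auto
  have "sat X \<rho> p (e'(v := x))" if "x \<in> X" for x
  proof -
    obtain y where "y \<in> Y" "good_position m' (insert v (V - {v})) (e(v := y)) (e'(v := x))"
      using good_position_answer_forall[OF pos _ \<open>x \<in> X\<close>] by blast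
    moreover have "sat Y \<sigma> p (e(v := y))" using FAll.prems(5) \<open>y \<in> Y\<close> by simp
    ultimately show ?thesis using FAll.IH[OF \<open>positive p\<close> m(2) _ \<open>fv p \<subseteq> _\<close>] by blast
  qed
  then show ?case by simp
qed (auto simp: good_position_def)

lemma holds_transfer:
  assumes "positive \<phi>" "fv \<phi> = {}" "holds Y \<sigma> \<phi>"
  shows "holds X \<rho> \<phi>"
  unfolding holds_def
proof (intro allI impI)
  fix e' :: "nat \<Rightarrow> 'a"
  obtain y where "y \<in> Y" using C_subset C_infinite infinite_imp_nonempty by blast
  then have "sat Y \<sigma> \<phi> (\<lambda>_. y)" using assms(3) unfolding holds_def by simp
  moreover have "good_position (qdepth \<phi>) {} (\<lambda>_. y) e'" unfolding good_position_def by simp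
  ultimately show "sat X \<rho> \<phi> e'" using sat_transfer assms(1,2) by blast
qed

lemma bij_hom_exists:
  assumes "countable X" "countable Y" "infinite {x \<in> X. \<rho>``{x} = {x}}"
  obtains h where "bij_betw h X Y" "\<forall>a b. (a, b) \<in> \<rho> \<longrightarrow> (h a, h b) \<in> \<sigma>"
proof -
  define S where "S = {x \<in> X. \<rho>``{x} = {x}}"
  have "infinite (X - S)"
  proof
    assume "finite (X - S)"
    obtain K where K: "K \<in> X//\<rho>" "max 2 (Suc (card (X - S))) \<le> card K"
      using classes_unbounded by blast
    have "K \<subseteq> X - S"
    proof
      fix x assume "x \<in> K"
      moreover have "K \<noteq> {x}" using K(2) by auto
      ultimately show "x \<in> X - S"
        using class_eq[OF K(1)] in_quotient_imp_subset[OF equiv_X K(1)] unfolding S_def by auto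
    qed
    then have "card K \<le> card (X - S)" using \<open>finite (X - S)\<close> card_mono by blast
    then show False using K(2) by simp
  qed
  have "countable S" "countable (X - S)"
    by (rule countable_subset[OF _ assms(1)], use S_def in blast)+
  moreover have "countable (Y - C)" "countable C"
    by (rule countable_subset[OF _ assms(2)], use C_subset in blast)+
  moreover have "infinite S" using assms(3) unfolding S_def .
  ultimately obtain f1 f2 where f1: "bij_betw f1 S (Y - C)" and f2: "bij_betw f2 (X - S) C"
    using countable_infinite_bij_betw \<open>infinite (X - S)\<close> infinite_outside_C C_infinite by metis
  define h where "h x = (if x \<in> S then f1 x else f2 x)" for x
  have "bij_betw h (S \<union> (X - S)) ((Y - C) \<union> C)"
    unfolding h_def by (rule bij_betw_disjoint_Un[OF f1 f2]) auto
  moreover have "S \<union> (X - S) = X" "(Y - C) \<union> C = Y" using C_subset unfolding S_def by auto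
  ultimately have bij: "bij_betw h X Y" by simp
  have "(h a, h b) \<in> \<sigma>" if "(a, b) \<in> \<rho>" for a b
  proof (cases "a \<in> S")
    case True
    then have "b = a" using that unfolding S_def by auto
    then show ?thesis using Y_refl bij True unfolding S_def by (auto simp: bij_betw_def)
  next
    case False
    moreover have "b \<notin> S"
    proof
      assume "b \<in> S"
      then have "a = b" using X_sym[OF that] unfolding S_def by blast
      then show False using False \<open>b \<in> S\<close> by simp
    qed
    moreover have "a \<in> X" "b \<in> X" using that equiv_type[OF equiv_X] by blast+
    ultimately have "h a \<in> C" "h b \<in> C" using f2 unfolding h_def bij_betw_def by auto
    then show ?thesis by (rule C_related)
  qed
  then show thesis using that bij by blast
qed

lemma pos_equiv_if_countable:
  assumes "countable X" "countable Y" "infinite {x \<in> X. \<rho>``{x} = {x}}"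
  shows "pos_equiv X \<rho> Y \<sigma>"
proof -
  obtain h where "bij_betw h X Y" "\<forall>a b. (a, b) \<in> \<rho> \<longrightarrow> (h a, h b) \<in> \<sigma>"
    using bij_hom_exists assms by blast
  then show ?thesis unfolding pos_equiv_def using holds_bij_hom holds_transfer by blast
qed

lemma not_inf_pos_equiv: "\<not> inf_pos_equiv X \<rho> Y \<sigma>"
  unfolding inf_pos_equiv_def
  using pfv_infinite_class_pfm not_pholds_infinite_class_pfm pholds_infinite_class_pfm by blast

lemma not_elem_equiv: "\<not> elem_equiv X \<rho> Y \<sigma>"
  unfolding elem_equiv_def
  using fv_one_nontrivial_class_fm not_holds_one_nontrivial_class_fm holds_one_nontrivial_class_fm
  by blast

end

theorem mainTheorem18:
  fixes X :: "'a set" and \<rho> :: "('a \<times> 'a) set"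
    and Y :: "'b set" and \<sigma> :: "('b \<times> 'b) set"
  assumes "countable X" and "equiv X \<rho>"
    and "infinite {C \<in> X // \<rho>. card C = 1}"
    and "\<forall>i::nat. i \<ge> 2 \<longrightarrow> (\<exists>!C. C \<in> X // \<rho> \<and> finite C \<and> card C = i)"
    and "\<forall>C \<in> X // \<rho>. finite C"
  assumes "countable Y" and "equiv Y \<sigma>"
    and "infinite {C \<in> Y // \<sigma>. card C = 1}"
    and "\<exists>C \<in> Y // \<sigma>. infinite C \<and> (\<forall>D \<in> Y // \<sigma>. D \<noteq> C \<longrightarrow> card D = 1)"
  shows "pos_equiv X \<rho> Y \<sigma> \<and> \<not> inf_pos_equiv X \<rho> Y \<sigma> \<and> \<not> elem_equiv X \<rho> Y \<sigma>"
proof -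
  obtain C where C: "C \<in> Y//\<sigma>" "infinite C" "\<forall>D\<in>Y//\<sigma>. D \<noteq> C \<longrightarrow> card D = 1"
    using assms(9) by blast
  have "\<exists>K\<in>X//\<rho>. N \<le> card K" for N :: nat
  proof -
    obtain K where "K \<in> X//\<rho>" "card K = max N 2" using assms(4) by (metis max.cobounded2)
    then show ?thesis by (metis max.cobounded1)
  qed
  moreover have "infinite (Y - C)"
    using infinite_outside_infinite_class[OF assms(7) C(1,2) assms(8)] .
  ultimately interpret positive_game X \<rho> Y \<sigma> C
    using assms(2,5,7) C singletons_outside_class[OF assms(7) C(1,3)] by unfold_locales auto
  show ?thesis
    using pos_equiv_if_countable[OF assms(1,6) infinite_singleton_points[OF assms(2,3)]]
      not_inf_pos_equiv not_elem_equiv by blast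
qed

end
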